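(* Let $n\ge2$ and $Q\in SU_n$ with eigenvalues $\mu_1,\dots,\mu_n$ (with multiplicity) ordered so that $\arg(\mu_1)\le\cdots\le\arg(\mu_n)$, and assume $\zeta(Q):=\frac1{2\pi}\sum_{j=1}^n\arg(\mu_j)\ge0$. Let $m(Q):=\min\{\|X\|_\phi^2:X\in\mathfrak{su}_n,\ \exp(X)=Q\}$ and $\Theta(Q):=\{X\in\mathfrak{su}_n:\exp(X)=Q,\ \|X\|_\phi^2=m(Q)\}$. Let $X_0\in\mathfrak{su}_n$ with $\exp(X_0)=Q$ whose $n$ eigenvalues are $(\arg(\mu_1)+2h_1\pi)\mathbf{i},\dots,(\arg(\mu_n)+2h_n\pi)\mathbf{i}$, where $h_1,\dots,h_n\in\mathbb{Z}$ and $\sum_{j=1}^nh_j=-\zeta(Q)$. (a) If $\zeta(Q)=0$, then $m(Q)=\sum_{j=1}^n(\arg(\mu_j))^2$, and $X_0\in\Theta(Q)$ if and only if $h_j=0$ for all $j\in\{1,\dots,n\}$. (b) If $\zeta(Q)\ge1$, then $m(Q)=\sum_{j=1}^{n-\zeta(Q)}(\arg(\mu_j))^2+\sum_{j=n-\zeta(Q)+1}^n(2\pi-\arg(\mu_j))^2$. Moreover, if $\mu_{n-\zeta(Q)}\ne\mu_{n-\zeta(Q)+1}$, then $X_0\in\Theta(Q)$ if and only if $h_j=0$ for all $j\in\{1,\dots,n-\zeta(Q)\}$ and $h_l=-1$ for all $l\in\{n-\zeta(Q)+1,\dots,n\}$; while if $\mu_{n-\zeta(Q)}=\mu_{n-\zeta(Q)+1}$,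 then $X_0\in\Theta(Q)$ if and only if $h_r=0$ for every $r\in\{1,\dots,n-\zeta(Q)-1\}$ with $\mu_r\ne\mu_{n-\zeta(Q)}$, $h_t=-1$ for every $t\in\{n-\zeta(Q)+2,\dots,n\}$ with $\mu_t\ne\mu_{n-\zeta(Q)}$, and $h_m\in\{0,-1\}$ for every index $m$ with $\mu_m=\mu_{n-\zeta(Q)}$ (subject to the constraint $\sum_{j=1}^nh_j=-\zeta(Q)$).
   Context: $SU_n$ is the special unitary group, $\mathfrak{su}_n$ its Lie algebra of traceless skew-Hermitian matrices, $\exp$ the matrix exponential, $\|X\|_\phi=\sqrt{\mathrm{tr}(XX^* )}$ the Frobenius norm, and $\arg(z)\in(-\pi,\pi]$ the principal argument. Note $\zeta(Q)$ is an integer. *)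

theory Defs
  imports "HOL-Analysis.Analysis"
begin

text \<open>n x n complex matrices are modelled as complex^'n^'n with n = CARD('n).\<close>

definition cadj :: "complex^'n^'n \<Rightarrow> complex^'n^'n" where
  "cadj X = (\<chi> i j. cnj (X $ j $ i))"

definition mpow :: "complex^'n^'n \<Rightarrow> nat \<Rightarrow> complex^'n^'n" where
  "mpow X k = (((**) X) ^^ k) (mat 1)"

definition mexp :: "complex^'n^'n \<Rightarrow> complex^'n^'n" where
  "mexp X = (\<chi> i j. (\<Sum>k. (mpow X k) $ i $ j / of_nat (fact k)))"

definition SU :: "(complex^'n^'n) set" where
  "SU = {Q. Q ** cadj Q = mat 1 \<and> det Q = 1}"

definition su :: "(complex^'n^'n) set" where
  "su = {X. cadj X = - X \<and> trace X = 0}"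

definition frob_sq :: "complex^'n^'n \<Rightarrow> real" where
  "frob_sq X = Re (trace (X ** cadj X))"

text \<open>mu_1..mu_n are the eigenvalues of A with multiplicity (roots of char. polynomial).\<close>
definition eigvals_mult :: "complex^'n^'n \<Rightarrow> (nat \<Rightarrow> complex) \<Rightarrow> bool" where
  "eigvals_mult A mu \<longleftrightarrow>
     (\<forall>x. det (mat x - A) = (\<Prod>j=1..CARD('n). x - mu j))"

definition m_Q :: "complex^'n^'n \<Rightarrow> real" where
  "m_Q Q = Inf {frob_sq X | X. X \<in> su \<and> mexp X = Q}"

definition Theta :: "complex^'n^'n \<Rightarrow> (complex^'n^'n) set" where
  "Theta Q = {X. X \<in> su \<and> mexp X = Q \<and> frob_sq X = m_Q Q}"

definition zeta :: "nat \<Rightarrow> (nat \<Rightarrow> complex) \<Rightarrow> real" where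
  "zeta n mu = (\<Sum>j=1..n. Arg (mu j)) / (2 * pi)"

end

theory Submission
  imports Defs
begin

(* Every logarithm X of Q in su(n) is unitarily diagonal with eigenvalues i r_l, and matching the
   eigenvalues exp(i r_l) of Q with the mu_j gives r = Arg mu_j + 2 pi k_j for integers k_j, where
   trace X = 0 means sum_j (Arg mu_j + 2 pi k_j) = 0; conversely every such k is realised in the
   eigenbasis of X0.  So m(Q) is the minimum of sum_j (Arg mu_j + 2 pi k_j)^2 over integer vectors
   with sum_j k_j = -zeta(Q).  For L = n - zeta(Q) and the Lagrange multiplier
   4 pi (pi - Arg mu_L) each penalised term is minimal at k_j = 0 when Arg mu_j <= Arg mu_L and at
   k_j = -1 when Arg mu_j >= Arg mu_L; hence the optimum lowers the zeta(Q) largest arguments by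
   2 pi, and the minimisers are the k doing this up to ties at the threshold. *)

section \<open>Minimising sums of squares under integer shifts\<close>

lemma int_mult_affine_nonneg:
  fixes g :: int and a c :: real
  assumes a: "0 < a" and c: "-a < c" "c \<le> a"
  shows "0 \<le> g * (a * g + c)"
    and "g * (a * g + c) = 0 \<longleftrightarrow> g = 0 \<or> (g = -1 \<and> c = a)"
proof -
  consider "g \<ge> 1" | "g = 0" | "g = -1" | "g \<le> -2" by linarith
  then have "0 \<le> g * (a * g + c) \<and> (g * (a * g + c) = 0 \<longleftrightarrow> g = 0 \<or> (g = -1 \<and> c = a))"
  proof cases
    case 1
    then have "a \<le> a * g" using a by simp
    then have "0 < a * g + c" using c by linarith
    with 1 show ?thesis by simp
  next
    case 4
    then have "a * g \<le> a * (-2)" using a by (intro mult_left_mono) auto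
    then have "a * g + c < 0" using a c by linarith
    with 4 have "0 < g * (a * g + c)" by (intro mult_neg_neg) auto
    then show ?thesis using 4 by auto
  qed (use c in auto)
  then show "0 \<le> g * (a * g + c)" "g * (a * g + c) = 0 \<longleftrightarrow> g = 0 \<or> (g = -1 \<and> c = a)"
    by auto
qed

lemma shifted_sq_below_threshold:
  fixes t \<theta> :: real and h :: int
  assumes "-pi < t" "t \<le> \<theta>" "\<theta> \<le> pi"
  shows "t\<^sup>2 \<le> (t + 2*pi*h)\<^sup>2 + 4*pi*(pi - \<theta>)*h"
    and "(t + 2*pi*h)\<^sup>2 + 4*pi*(pi - \<theta>)*h = t\<^sup>2 \<longleftrightarrow> h = 0 \<or> (h = -1 \<and> t = \<theta>)"
proof -
  have diff: "(t + 2*pi*h)\<^sup>2 + 4*pi*(pi - \<theta>)*h - t\<^sup>2 = 4*pi * (h * (pi * h + (pi + t - \<theta>)))"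
    by (simp add: power2_eq_square algebra_simps)
  note core = int_mult_affine_nonneg[of pi "pi + t - \<theta>" h]
  have "0 \<le> 4*pi * (h * (pi * h + (pi + t - \<theta>)))"
    using core(1) assms by simp
  then show "t\<^sup>2 \<le> (t + 2*pi*h)\<^sup>2 + 4*pi*(pi - \<theta>)*h"
    using diff by linarith
  show "(t + 2*pi*h)\<^sup>2 + 4*pi*(pi - \<theta>)*h = t\<^sup>2 \<longleftrightarrow> h = 0 \<or> (h = -1 \<and> t = \<theta>)"
    using core(2) diff assms by auto
qed

lemma shifted_sq_above_threshold:
  fixes t \<theta> :: real and h :: int
  assumes "-pi < \<theta>" "\<theta> \<le> t" "t \<le> pi"
  shows "(2*pi - t)\<^sup>2 - 4*pi*(pi - \<theta>) \<le> (t + 2*pi*h)\<^sup>2 + 4*pi*(pi - \<theta>)*h"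
    and "(t + 2*pi*h)\<^sup>2 + 4*pi*(pi - \<theta>)*h = (2*pi - t)\<^sup>2 - 4*pi*(pi - \<theta>)
           \<longleftrightarrow> h = -1 \<or> (h = 0 \<and> t = \<theta>)"
proof -
  define g where "g = - h - 1"
  have diff: "(t + 2*pi*h)\<^sup>2 + 4*pi*(pi - \<theta>)*h - ((2*pi - t)\<^sup>2 - 4*pi*(pi - \<theta>))
      = 4*pi * (g * (pi * g + (pi + \<theta> - t)))"
    by (simp add: g_def power2_eq_square algebra_simps)
  note core = int_mult_affine_nonneg[of pi "pi + \<theta> - t" g]
  have "0 \<le> 4*pi * (g * (pi * g + (pi + \<theta> - t)))"
    using core(1) assms by simp
  then show "(2*pi - t)\<^sup>2 - 4*pi*(pi - \<theta>) \<le> (t + 2*pi*h)\<^sup>2 + 4*pi*(pi - \<theta>)*h"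
    using diff by linarith
  show "(t + 2*pi*h)\<^sup>2 + 4*pi*(pi - \<theta>)*h = (2*pi - t)\<^sup>2 - 4*pi*(pi - \<theta>)
      \<longleftrightarrow> h = -1 \<or> (h = 0 \<and> t = \<theta>)"
    using core(2) diff assms by (auto simp: g_def)
qed

lemma sum_shifted_sq_lower_bound:
  fixes t :: "nat \<Rightarrow> real" and h :: "nat \<Rightarrow> int" and \<theta> :: real
  assumes L: "L \<le> n" and t: "\<forall>j\<in>{1..n}. -pi < t j \<and> t j \<le> pi"
    and \<theta>: "-pi < \<theta>" "\<theta> \<le> pi"
    and below: "\<forall>j\<in>{1..L}. t j \<le> \<theta>" and above: "\<forall>j\<in>{L+1..n}. \<theta> \<le> t j"
    and hsum: "(\<Sum>j=1..n. h j) = - int (n - L)"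
  shows "(\<Sum>j=1..L. (t j)\<^sup>2) + (\<Sum>j=L+1..n. (2*pi - t j)\<^sup>2) \<le> (\<Sum>j=1..n. (t j + 2*pi*h j)\<^sup>2)"
    and "(\<Sum>j=1..n. (t j + 2*pi*h j)\<^sup>2) = (\<Sum>j=1..L. (t j)\<^sup>2) + (\<Sum>j=L+1..n. (2*pi - t j)\<^sup>2)
           \<longleftrightarrow> (\<forall>j\<in>{1..n}. (h j = 0 \<and> t j \<le> \<theta>) \<or> (h j = -1 \<and> \<theta> \<le> t j))"
proof -
  \<comment> \<open>\<open>lam\<close> is a Lagrange multiplier for the constraint on \<open>\<Sum>j. h j\<close>: it cancels in the sum\<close>
  define lam where "lam = 4*pi*(pi - \<theta>)"
  define base where "base j = (if j \<le> L then (t j)\<^sup>2 else (2*pi - t j)\<^sup>2 - lam)" for j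
  define defect where "defect j = (t j + 2*pi*h j)\<^sup>2 + lam * h j - base j" for j
  let ?bound = "(\<Sum>j=1..L. (t j)\<^sup>2) + (\<Sum>j=L+1..n. (2*pi - t j)\<^sup>2)"
  have split: "(\<Sum>j=1..n. f j) = (\<Sum>j=1..L. f j) + (\<Sum>j=L+1..n. f j)" for f :: "nat \<Rightarrow> real"
    using sum.ub_add_nat[of 1 L f "n - L"] L by simp
  have "(\<Sum>j=1..n. base j) = (\<Sum>j=1..L. base j) + (\<Sum>j=L+1..n. base j)"
    by (rule split)
  also have "\<dots> = (\<Sum>j=1..L. (t j)\<^sup>2) + (\<Sum>j=L+1..n. (2*pi - t j)\<^sup>2 - lam)"
    by (intro arg_cong2[where f = "(+)"] sum.cong) (auto simp: base_def)
  also have "\<dots> = ?bound - lam * (n - L)"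
    using L by (simp add: sum_subtractf of_nat_diff)
  finally have "(\<Sum>j=1..n. base j) = ?bound - lam * (n - L)" .
  moreover have "(\<Sum>j=1..n. lam * h j) = - lam * (n - L)"
  proof -
    have "(\<Sum>j=1..n. real_of_int (h j)) = - real (n - L)"
      using arg_cong[OF hsum, of real_of_int] by simp
    then show ?thesis by (simp add: sum_distrib_left[symmetric])
  qed
  ultimately have total: "(\<Sum>j=1..n. (t j + 2*pi*h j)\<^sup>2) = (\<Sum>j=1..n. defect j) + ?bound"
    by (simp add: defect_def sum.distrib sum_subtractf)
  let ?optimal = "\<lambda>j. (h j = 0 \<and> t j \<le> \<theta>) \<or> (h j = -1 \<and> \<theta> \<le> t j)"
  have defect: "0 \<le> defect j \<and> (defect j = 0 \<longleftrightarrow> ?optimal j)" if j: "j \<in> {1..n}" for j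
  proof (cases "j \<le> L")
    case True
    then have "t j \<le> \<theta>" using below j by auto
    with shifted_sq_below_threshold[of "t j" \<theta> "h j"] True t j \<theta> show ?thesis
      by (auto simp: defect_def base_def lam_def)
  next
    case False
    then have "\<theta> \<le> t j" using above j by auto
    with shifted_sq_above_threshold[of \<theta> "t j" "h j"] False t j \<theta> show ?thesis
      by (auto simp: defect_def base_def lam_def)
  qed
  show "?bound \<le> (\<Sum>j=1..n. (t j + 2*pi*h j)\<^sup>2)"
    using total sum_nonneg[of "{1..n}" defect] defect by simp
  show "(\<Sum>j=1..n. (t j + 2*pi*h j)\<^sup>2) = ?bound \<longleftrightarrow> (\<forall>j\<in>{1..n}. ?optimal j)"
    using total sum_nonneg_eq_0_iff[of "{1..n}" defect] defect by simp
qed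

lemma sum_shifted_sq_lower_bound_attained:
  fixes t :: "nat \<Rightarrow> real" and k :: "nat \<Rightarrow> int" and \<theta> :: real
  assumes L: "L \<le> n" and k: "\<And>j. k j = (if j \<le> L then 0 else -1)"
    and t: "\<forall>j\<in>{1..n}. -pi < t j \<and> t j \<le> pi" and \<theta>: "-pi < \<theta>" "\<theta> \<le> pi"
    and below: "\<forall>j\<in>{1..L}. t j \<le> \<theta>" and above: "\<forall>j\<in>{L+1..n}. \<theta> \<le> t j"
  shows "(\<Sum>j=1..n. k j) = - int (n - L)"
    and "(\<Sum>j=1..n. (t j + 2*pi*k j)\<^sup>2) = (\<Sum>j=1..L. (t j)\<^sup>2) + (\<Sum>j=L+1..n. (2*pi - t j)\<^sup>2)"
proof -
  have "(\<Sum>j=1..n. k j) = (\<Sum>j=1..L. k j) + (\<Sum>j=L+1..n. k j)"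
    using sum.ub_add_nat[of 1 L k "n - L"] L by simp
  also have "\<dots> = - int (n - L)" by (simp add: k)
  finally show k_sum: "(\<Sum>j=1..n. k j) = - int (n - L)" .
  have "\<forall>j\<in>{1..n}. (k j = 0 \<and> t j \<le> \<theta>) \<or> (k j = -1 \<and> \<theta> \<le> t j)"
  proof
    fix j assume "j \<in> {1..n}"
    then show "(k j = 0 \<and> t j \<le> \<theta>) \<or> (k j = -1 \<and> \<theta> \<le> t j)"
      using below above by (cases "j \<le> L") (auto simp: k)
  qed
  then show "(\<Sum>j=1..n. (t j + 2*pi*k j)\<^sup>2) = (\<Sum>j=1..L. (t j)\<^sup>2) + (\<Sum>j=L+1..n. (2*pi - t j)\<^sup>2)"
    by (rule sum_shifted_sq_lower_bound(2)[OF L t \<theta> below above k_sum, THEN iffD2])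
qed

lemma sum_nonpos_eq_0_iff:
  fixes f :: "'a \<Rightarrow> 'b::ordered_ab_group_add"
  assumes "finite A" "\<And>x. x \<in> A \<Longrightarrow> f x \<le> 0"
  shows "sum f A = 0 \<longleftrightarrow> (\<forall>x\<in>A. f x = 0)"
  using sum_nonneg_eq_0_iff[of A "\<lambda>x. - f x"] assms by (simp add: sum_negf)

lemma optimal_shifts_at_strict_gap:
  fixes t :: "nat \<Rightarrow> real" and h :: "nat \<Rightarrow> int"
  assumes L: "1 \<le> L" "L < n"
    and sorted: "\<forall>i j. 1 \<le> i \<and> i \<le> j \<and> j \<le> n \<longrightarrow> t i \<le> t j"
    and gap: "t L < t (L+1)"
    and hsum: "(\<Sum>j=1..n. h j) = - int (n - L)"
  shows "(\<forall>j\<in>{1..n}. (h j = 0 \<and> t j \<le> t L) \<or> (h j = -1 \<and> t L \<le> t j))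
     \<longleftrightarrow> (\<forall>j\<in>{1..L}. h j = 0) \<and> (\<forall>j\<in>{L+1..n}. h j = -1)"
proof
  assume opt: "\<forall>j\<in>{1..n}. (h j = 0 \<and> t j \<le> t L) \<or> (h j = -1 \<and> t L \<le> t j)"
  have upper: "\<forall>j\<in>{L+1..n}. h j = -1"
  proof
    fix j assume j: "j \<in> {L+1..n}"
    then have "t L < t j" using sorted[rule_format, of "L+1" j] gap L by auto
    moreover have "j \<in> {1..n}" using j by auto
    ultimately show "h j = -1" using opt by force
  qed
  have "(\<Sum>j=1..n. h j) = (\<Sum>j=1..L. h j) + (\<Sum>j=L+1..n. h j)"
    using sum.ub_add_nat[of 1 L h "n - L"] L by simp
  also have "(\<Sum>j=L+1..n. h j) = - int (n - L)"
    using upper by simp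
  finally have "(\<Sum>j=1..L. h j) = 0" using hsum by simp
  moreover have "h j \<le> 0" if "j \<in> {1..L}" for j
  proof -
    have "j \<in> {1..n}" using that L by auto
    then have "h j = 0 \<or> h j = -1" using opt by blast
    then show ?thesis by auto
  qed
  ultimately have "\<forall>j\<in>{1..L}. h j = 0" using sum_nonpos_eq_0_iff[of "{1..L}" h] by simp
  with upper show "(\<forall>j\<in>{1..L}. h j = 0) \<and> (\<forall>j\<in>{L+1..n}. h j = -1)" by blast
next
  assume "(\<forall>j\<in>{1..L}. h j = 0) \<and> (\<forall>j\<in>{L+1..n}. h j = -1)"
  moreover have "t j \<le> t L" if "j \<in> {1..L}" for j using sorted that L by auto
  moreover have "t L \<le> t j" if "j \<in> {L+1..n}" for j using sorted that L by auto
  ultimately show "\<forall>j\<in>{1..n}. (h j = 0 \<and> t j \<le> t L) \<or> (h j = -1 \<and> t L \<le> t j)"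
    by (metis atLeastAtMost_iff not_less_eq_eq Suc_eq_plus1)
qed

lemma optimal_shifts_at_tie:
  fixes t :: "nat \<Rightarrow> real" and h :: "nat \<Rightarrow> int" and mu :: "nat \<Rightarrow> 'a"
  assumes L: "1 \<le> L" "L < n"
    and sorted: "\<forall>i j. 1 \<le> i \<and> i \<le> j \<and> j \<le> n \<longrightarrow> t i \<le> t j"
    and mu_eq_iff: "\<forall>j\<in>{1..n}. mu j = mu L \<longleftrightarrow> t j = t L"
    and tie: "mu L = mu (L+1)"
  shows "(\<forall>j\<in>{1..n}. (h j = 0 \<and> t j \<le> t L) \<or> (h j = -1 \<and> t L \<le> t j))
     \<longleftrightarrow> (\<forall>j\<in>{1..L-1}. mu j \<noteq> mu L \<longrightarrow> h j = 0) \<and>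
         (\<forall>j\<in>{L+2..n}. mu j \<noteq> mu L \<longrightarrow> h j = -1) \<and>
         (\<forall>j\<in>{1..n}. mu j = mu L \<longrightarrow> h j \<in> {0, -1})"
proof
  assume opt: "\<forall>j\<in>{1..n}. (h j = 0 \<and> t j \<le> t L) \<or> (h j = -1 \<and> t L \<le> t j)"
  have "h j = 0" if j: "j \<in> {1..L-1}" "mu j \<noteq> mu L" for j
  proof -
    have "t j \<le> t L" "t j \<noteq> t L" using sorted mu_eq_iff j L by auto
    moreover have "j \<in> {1..n}" using j L by auto
    ultimately show ?thesis using opt by fastforce
  qed
  moreover have "h j = -1" if j: "j \<in> {L+2..n}" "mu j \<noteq> mu L" for j
  proof -
    have "t L \<le> t j" "t j \<noteq> t L" using sorted mu_eq_iff j L by auto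
    moreover have "j \<in> {1..n}" using j L by auto
    ultimately show ?thesis using opt by fastforce
  qed
  moreover have "h j \<in> {0, -1}" if "j \<in> {1..n}" for j using opt that by auto
  ultimately show "(\<forall>j\<in>{1..L-1}. mu j \<noteq> mu L \<longrightarrow> h j = 0) \<and>
      (\<forall>j\<in>{L+2..n}. mu j \<noteq> mu L \<longrightarrow> h j = -1) \<and> (\<forall>j\<in>{1..n}. mu j = mu L \<longrightarrow> h j \<in> {0, -1})"
    by blast
next
  assume shifts: "(\<forall>j\<in>{1..L-1}. mu j \<noteq> mu L \<longrightarrow> h j = 0) \<and>
      (\<forall>j\<in>{L+2..n}. mu j \<noteq> mu L \<longrightarrow> h j = -1) \<and> (\<forall>j\<in>{1..n}. mu j = mu L \<longrightarrow> h j \<in> {0, -1})"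
  show "\<forall>j\<in>{1..n}. (h j = 0 \<and> t j \<le> t L) \<or> (h j = -1 \<and> t L \<le> t j)"
  proof
    fix j assume j: "j \<in> {1..n}"
    consider "mu j = mu L" | "mu j \<noteq> mu L" "j < L" | "mu j \<noteq> mu L" "L + 1 < j"
      using tie by (cases "j < L"; cases "j = L"; cases "j = L + 1") auto
    then show "(h j = 0 \<and> t j \<le> t L) \<or> (h j = -1 \<and> t L \<le> t j)"
    proof cases
      case 1
      then show ?thesis using shifts mu_eq_iff j by auto
    next
      case 2
      then have "h j = 0" "t j \<le> t L" using shifts sorted j L by auto
      then show ?thesis by simp
    next
      case 3
      then have "h j = -1" "t L \<le> t j" using shifts sorted j L by auto
      then show ?thesis by simp
    qed
  qed
qed

lemma sum_int_shifts:
  "(\<Sum>j\<in>A. t j + 2*pi*k j) = (\<Sum>j\<in>A. t j) + 2 * pi * of_int (\<Sum>j\<in>A. k j)"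
  by (simp add: sum.distrib sum_distrib_left)

section \<open>The spectral theorem for Hermitian matrices\<close>

definition cinner :: "complex^'n \<Rightarrow> complex^'n \<Rightarrow> complex" where
  "cinner v w = (\<Sum>i\<in>UNIV. cnj (v$i) * w$i)"

lemma cinner_zero_right [simp]: "cinner v 0 = 0"
  by (simp add: cinner_def)

lemma cinner_add_left: "cinner (v + w) u = cinner v u + cinner w u"
  by (simp add: cinner_def distrib_right sum.distrib)

lemma cinner_add_right: "cinner v (w + u) = cinner v w + cinner v u"
  by (simp add: cinner_def distrib_left sum.distrib)

lemma cinner_diff_right: "cinner v (w - u) = cinner v w - cinner v u"
  by (simp add: cinner_def right_diff_distrib sum_subtractf)

lemma cinner_smult_left: "cinner (c *s v) w = cnj c * cinner v w"
  by (simp add: cinner_def sum_distrib_left mult.assoc)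

lemma cinner_smult_right: "cinner v (c *s w) = c * cinner v w"
  by (simp add: cinner_def sum_distrib_left mult.left_commute)

lemma scaleR_eq_of_real_smult: "r *\<^sub>R (v :: complex^'n) = complex_of_real r *s v"
  unfolding vec_eq_iff vector_scaleR_component vector_smult_component by (simp add: scaleR_conv_of_real)

lemma cinner_scaleR_left: "cinner (r *\<^sub>R v) w = of_real r * cinner v w"
  by (simp add: scaleR_eq_of_real_smult cinner_smult_left)

lemma cinner_scaleR_right: "cinner v (r *\<^sub>R w) = of_real r * cinner v w"
  by (simp add: scaleR_eq_of_real_smult cinner_smult_right)

lemma cnj_cinner: "cnj (cinner v w) = cinner w v"
  by (simp add: cinner_def mult.commute)

lemma inner_eq_Re_cinner: "inner v w = Re (cinner v w)"
  by (simp add: cinner_def inner_vec_def inner_complex_def Re_sum)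

lemma cinner_self: "cinner v v = of_real ((norm v)\<^sup>2)"
  by (simp add: complex_eq_iff power2_norm_eq_inner inner_eq_Re_cinner) (simp add: cinner_def Im_sum)

lemma cinner_matrix_left: "cinner (A *v v) w = cinner v (cadj A *v w)"
proof -
  have "cinner (A *v v) w = (\<Sum>i\<in>UNIV. \<Sum>j\<in>UNIV. cnj (A$i$j) * cnj (v$j) * w$i)"
    by (simp add: cinner_def matrix_vector_mult_def sum_distrib_right)
  also have "\<dots> = (\<Sum>j\<in>UNIV. \<Sum>i\<in>UNIV. cnj (A$i$j) * cnj (v$j) * w$i)"
    by (rule sum.swap)
  also have "\<dots> = cinner v (cadj A *v w)"
    by (simp add: cinner_def cadj_def matrix_vector_mult_def sum_distrib_left mult_ac)
  finally show ?thesis .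
qed

lemma matrix_vector_mult_scaleR_complex: "(A :: complex^'n^'m) *v (r *\<^sub>R v) = r *\<^sub>R (A *v v)"
  by (simp add: scaleR_eq_of_real_smult vector_scalar_commute)

lemma exists_nonzero_cinner_orthogonal:
  fixes B :: "(complex^'n) set"
  assumes "finite B" "card B < CARD('n)"
  obtains x where "x \<noteq> 0" "\<forall>b\<in>B. cinner b x = 0"
proof -
  \<comment> \<open>real orthogonality to both \<open>b\<close> and \<open>\<i> b\<close> is complex orthogonality to \<open>b\<close>\<close>
  define T where "T = B \<union> (\<lambda>b. \<i> *s b) ` B"
  have "card T \<le> 2 * card B"
    unfolding T_def using card_Un_le[of B "(\<lambda>b. \<i> *s b) ` B"] card_image_le[OF assms(1), of "\<lambda>b. \<i> *s b"]
    by linarith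
  then have "dim T < DIM(complex^'n)"
    using assms dim_le_card'[of T] by (simp add: T_def)
  then obtain x :: "complex^'n" where x: "x \<noteq> 0" "\<And>y. y \<in> span T \<Longrightarrow> orthogonal x y"
    using orthogonal_to_subspace_exists by blast
  have "cinner b x = 0" if b: "b \<in> B" for b
  proof -
    have "Re (cinner x b) = 0" "Re (cinner x (\<i> *s b)) = 0"
      using x(2) b by (auto simp: T_def orthogonal_def inner_eq_Re_cinner span_base)
    then have "cinner x b = 0" by (simp add: cinner_smult_right complex_eq_iff)
    then show ?thesis using cnj_cinner[of x b] by simp
  qed
  with x show ?thesis using that by blast
qed

lemma nonpos_if_linear_le_quadratic:
  fixes W A :: real
  assumes quadratic: "\<And>t. 2 * t * W \<le> t\<^sup>2 * A"
  shows "W \<le> 0"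
proof (cases "A \<le> 0")
  case True
  then show ?thesis using quadratic[of 1] by simp
next
  case False
  show ?thesis
  proof (rule ccontr)
    assume "\<not> W \<le> 0"
    then have pos: "0 < W / A" using False by simp
    have "(W / A)\<^sup>2 * A = (W / A) * W" using False by (simp add: power2_eq_square)
    then have "(W / A) * (2 * W) \<le> (W / A) * W"
      using quadratic[of "W / A"] by (simp add: mult_ac)
    then have "2 * W \<le> W" using pos by (simp only: mult_le_cancel_left_pos)
    then show False using \<open>\<not> W \<le> 0\<close> by simp
  qed
qed

lemma rayleigh_maximiser_is_eigenvector:
  fixes H :: "complex^'n^'n" and S :: "(complex^'n) set"
  assumes herm: "cadj H = H" and S: "subspace S" and invariant: "\<And>u. u \<in> S \<Longrightarrow> H *v u \<in> S"
    and v: "v \<in> S" "norm v = 1"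
    and max: "\<And>u. u \<in> S \<Longrightarrow> Re (cinner u (H *v u)) \<le> Re (cinner v (H *v v)) * (norm u)\<^sup>2"
  shows "H *v v = complex_of_real (Re (cinner v (H *v v))) *s v"
proof -
  define \<mu> where "\<mu> = Re (cinner v (H *v v))"
  have self_adj: "cinner (H *v x) y = cinner x (H *v y)" for x y
    using cinner_matrix_left[of H x y] herm by simp
  have vv: "cinner v v = 1" using v(2) by (simp add: cinner_self)
  have "cnj (cinner v (H *v v)) = cinner v (H *v v)"
    using cnj_cinner[of v "H *v v"] self_adj[of v v] by simp
  then have c: "cinner v (H *v v) = of_real \<mu>" by (simp add: \<mu>_def complex_eq_iff)
  define w where "w = H *v v - \<mu> *\<^sub>R v"
  define W where "W = (norm w)\<^sup>2"
  have wS: "w \<in> S" unfolding w_def using S v invariant by (intro subspace_diff subspace_scale) auto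
  have vw: "cinner v w = 0" and wv: "cinner w v = 0"
    using cnj_cinner[of v w] by (simp_all add: w_def cinner_diff_right cinner_scaleR_right vv c)
  have ww: "cinner w w = of_real W" by (simp add: W_def cinner_self)
  have wHv: "cinner w (H *v v) = of_real W"
  proof -
    have "H *v v = w + \<mu> *\<^sub>R v" by (simp add: w_def)
    then show ?thesis by (simp add: cinner_add_right cinner_scaleR_right wv ww)
  qed
  have vHw: "cinner v (H *v w) = of_real W"
    using self_adj[of v w] cnj_cinner[of w "H *v v"] wHv by simp
  define A where "A = \<mu> * W - Re (cinner w (H *v w))"
  \<comment> \<open>maximality of \<open>v\<close> against \<open>v + t w\<close>, where \<open>w\<close> is the component of \<open>H v\<close> orthogonal to \<open>v\<close>\<close>
  have "2 * t * W \<le> t\<^sup>2 * A" for t :: real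
  proof -
    define u where "u = v + t *\<^sub>R w"
    have "u \<in> S" unfolding u_def using S v wS by (intro subspace_add subspace_scale) auto
    moreover have "cinner u (H *v u) = of_real \<mu> + of_real (2 * t * W) + of_real (t\<^sup>2) * cinner w (H *v w)"
      by (simp add: u_def matrix_vector_right_distrib matrix_vector_mult_scaleR_complex cinner_add_left
          cinner_add_right cinner_scaleR_left cinner_scaleR_right c vHw wHv power2_eq_square algebra_simps)
    moreover have "cinner u u = 1 + of_real (t\<^sup>2 * W)"
      by (simp add: u_def cinner_add_left cinner_add_right cinner_scaleR_left cinner_scaleR_right
          vv vw wv ww power2_eq_square)
    then have "(norm u)\<^sup>2 = 1 + t\<^sup>2 * W" by (simp add: cinner_self complex_eq_iff)
    ultimately show ?thesis using max[of u] by (simp add: \<mu>_def A_def algebra_simps)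
  qed
  then have "W \<le> 0" by (rule nonpos_if_linear_le_quadratic)
  then have "w = 0" by (simp add: W_def)
  then show ?thesis by (simp add: w_def \<mu>_def scaleR_eq_of_real_smult)
qed

lemma rayleigh_quotient_attains_max:
  fixes H :: "complex^'n^'n" and S :: "(complex^'n) set"
  assumes S: "subspace S" "closed S" and x: "x \<in> S" "x \<noteq> 0"
  obtains v where "v \<in> S" "norm v = 1"
    "\<And>u. u \<in> S \<Longrightarrow> Re (cinner u (H *v u)) \<le> Re (cinner v (H *v v)) * (norm u)\<^sup>2"
proof -
  define K where "K = S \<inter> sphere 0 1"
  have "compact K" unfolding K_def using S(2) by (intro closed_Int_compact) auto
  have "(1 / norm x) *\<^sub>R x \<in> K" using S(1) x by (simp add: K_def subspace_scale)
  then have "K \<noteq> {}" by auto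
  define f where "f u = Re (cinner u (H *v u))" for u
  have "continuous_on K f"
    unfolding f_def cinner_def matrix_vector_mult_def by (intro continuous_intros)
  then obtain v where v: "v \<in> K" and v_max: "\<forall>y\<in>K. f y \<le> f v"
    using continuous_attains_sup[OF \<open>compact K\<close> \<open>K \<noteq> {}\<close>] by blast
  have f_scaleR: "f (r *\<^sub>R u) = r\<^sup>2 * f u" for r u
    by (simp add: f_def matrix_vector_mult_scaleR_complex cinner_scaleR_left cinner_scaleR_right
        power2_eq_square)
  have "f u \<le> f v * (norm u)\<^sup>2" if u: "u \<in> S" for u
  proof (cases "u = 0")
    case True
    then show ?thesis by (simp add: f_def)
  next
    case False
    then have "(1 / norm u) *\<^sub>R u \<in> K" using u S(1) by (simp add: K_def subspace_scale)
    then have "f ((1 / norm u) *\<^sub>R u) \<le> f v" using v_max by blast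
    then have "f u / (norm u)\<^sup>2 \<le> f v" by (simp add: f_scaleR power_divide)
    then show ?thesis using False by (simp add: divide_le_eq)
  qed
  then show ?thesis using v by (intro that[of v]) (auto simp: K_def f_def)
qed

lemma hermitian_eigenvector_orthogonal:
  fixes H :: "complex^'n^'n" and B :: "(complex^'n) set"
  assumes herm: "cadj H = H" and B: "finite B" "card B < CARD('n)"
    and eigen: "\<forall>b\<in>B. \<exists>c::real. H *v b = complex_of_real c *s b"
  obtains v c where "norm v = 1" "\<forall>b\<in>B. cinner b v = 0" "H *v v = complex_of_real c *s v"
proof -
  define S where "S = {v. \<forall>b\<in>B. cinner b v = 0}"
  have S: "subspace S"
    by (simp add: subspace_def S_def cinner_add_right cinner_scaleR_right)
  have "closed {v. cinner b v = 0}" for b :: "complex^'n"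
    unfolding cinner_def by (intro closed_Collect_eq continuous_intros)
  then have "closed S" unfolding S_def Collect_ball_eq by blast
  have invariant: "H *v u \<in> S" if "u \<in> S" for u
  proof -
    have "cinner b (H *v u) = 0" if b: "b \<in> B" for b
    proof -
      obtain c :: real where "H *v b = complex_of_real c *s b" using eigen b by auto
      then have "cinner b (H *v u) = c * cinner b u"
        using cinner_matrix_left[of H b u] herm by (simp add: cinner_smult_left)
      then show ?thesis using \<open>u \<in> S\<close> b by (simp add: S_def)
    qed
    then show ?thesis by (simp add: S_def)
  qed
  obtain x where x: "x \<in> S" "x \<noteq> 0"
    using exists_nonzero_cinner_orthogonal[OF B] by (auto simp: S_def)
  obtain v where v: "v \<in> S" "norm v = 1"
    and max: "\<And>u. u \<in> S \<Longrightarrow> Re (cinner u (H *v u)) \<le> Re (cinner v (H *v v)) * (norm u)\<^sup>2"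
    by (rule rayleigh_quotient_attains_max[OF S \<open>closed S\<close> x, where H = H]) blast
  have "H *v v = complex_of_real (Re (cinner v (H *v v))) *s v"
    using rayleigh_maximiser_is_eigenvector[OF herm S invariant v max] .
  moreover have "\<forall>b\<in>B. cinner b v = 0" using v by (auto simp: S_def)
  ultimately show ?thesis using that v(2) by blast
qed

lemma hermitian_orthonormal_eigenbasis:
  fixes H :: "complex^'n^'n"
  assumes herm: "cadj H = H"
  obtains B where "finite B" "card B = CARD('n)"
    "\<forall>b\<in>B. \<forall>b'\<in>B. cinner b b' = (if b = b' then 1 else 0)"
    "\<forall>b\<in>B. \<exists>c::real. H *v b = complex_of_real c *s b"
proof -
  have "\<exists>B. finite B \<and> card B = k \<and> (\<forall>b\<in>B. \<forall>b'\<in>B. cinner b b' = (if b = b' then 1 else 0))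
          \<and> (\<forall>b\<in>B. \<exists>c::real. H *v b = complex_of_real c *s b)" if "k \<le> CARD('n)" for k
    using that
  proof (induction k)
    case 0
    show ?case by (intro exI[of _ "{}"]) simp
  next
    case (Suc k)
    then obtain B where B: "finite B" "card B = k"
      and orth: "\<forall>b\<in>B. \<forall>b'\<in>B. cinner b b' = (if b = b' then 1 else 0)"
      and eigen: "\<forall>b\<in>B. \<exists>c::real. H *v b = complex_of_real c *s b" by auto
    obtain v c where v: "norm v = 1" "\<forall>b\<in>B. cinner b v = 0" "H *v v = complex_of_real c *s v"
      using hermitian_eigenvector_orthogonal[OF herm B(1) _ eigen] B(2) Suc.prems by auto
    have vv: "cinner v v = 1" using v(1) by (simp add: cinner_self)
    then have "v \<notin> B" using v(2) by auto
    moreover have "\<forall>b\<in>B. cinner v b = 0" using v(2) cnj_cinner by (metis complex_cnj_zero)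
    ultimately show ?case using B orth eigen v vv
      by (intro exI[of _ "insert v B"]) (auto simp: card_insert_if)
  qed
  then show ?thesis using that by blast
qed

definition diag_mat :: "('n \<Rightarrow> complex) \<Rightarrow> complex^'n^'n" where
  "diag_mat d = (\<chi> i j. if i = j then d i else 0)"

definition unitary :: "complex^'n^'n \<Rightarrow> bool" where
  "unitary U \<longleftrightarrow> cadj U ** U = mat 1 \<and> U ** cadj U = mat 1"

lemma hermitian_unitary_diag:
  fixes H :: "complex^'n^'n"
  assumes herm: "cadj H = H"
  obtains U d where "unitary U" "H = U ** diag_mat (\<lambda>k. complex_of_real (d k)) ** cadj U"
proof -
  obtain B where B: "finite B" "card B = CARD('n)"
    and orth: "\<forall>b\<in>B. \<forall>b'\<in>B. cinner b b' = (if b = b' then 1 else 0)"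
    and eigen: "\<forall>b\<in>B. \<exists>c::real. H *v b = complex_of_real c *s b"
    using hermitian_orthonormal_eigenbasis[OF herm] by blast
  obtain e where e: "bij_betw e (UNIV::'n set) B"
    using finite_same_card_bij[of "UNIV::'n set" B] B by auto
  then have eB: "e k \<in> B" and e_eq_iff: "e k = e l \<longleftrightarrow> k = l" for k l
    by (auto simp: bij_betw_def inj_on_def)
  have "\<forall>k. \<exists>c::real. H *v e k = complex_of_real c *s e k" using eigen eB by blast
  then obtain d where d: "\<And>k. H *v e k = complex_of_real (d k) *s e k" by metis
  define U :: "complex^'n^'n" where "U = (\<chi> i k. e k $ i)"
  have "(cadj U ** U) $ k $ l = cinner (e k) (e l)" for k l
    by (simp add: matrix_matrix_mult_def cadj_def U_def cinner_def)
  then have UU: "cadj U ** U = mat 1" using orth eB e_eq_iff by (simp add: vec_eq_iff mat_def)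
  then have UU': "U ** cadj U = mat 1" using matrix_left_right_inverse by blast
  have "(H ** U) $ i $ k = (H *v e k) $ i" for i k
    by (simp add: matrix_matrix_mult_def matrix_vector_mult_def U_def)
  moreover have "(U ** diag_mat (\<lambda>k. complex_of_real (d k))) $ i $ k = U $ i $ k * d k" for i k
    by (simp add: matrix_matrix_mult_def diag_mat_def if_distrib cong: if_cong)
  ultimately have HU: "H ** U = U ** diag_mat (\<lambda>k. complex_of_real (d k))"
    using d by (simp add: vec_eq_iff U_def mult.commute)
  have "H = H ** (U ** cadj U)" by (simp add: UU')
  also have "\<dots> = U ** diag_mat (\<lambda>k. complex_of_real (d k)) ** cadj U"
    by (simp add: matrix_mul_assoc HU)
  finally have "H = U ** diag_mat (\<lambda>k. complex_of_real (d k)) ** cadj U" .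
  with UU UU' show ?thesis using that unfolding unitary_def by blast
qed

lemma unitary_diag_component:
  "(U ** diag_mat d ** cadj U) $ i $ j = (\<Sum>l\<in>UNIV. U$i$l * d l * cnj (U$j$l))"
proof -
  have "(U ** diag_mat d) $ i $ m = U$i$m * d m" for m
    by (simp add: matrix_matrix_mult_def diag_mat_def if_distrib cong: if_cong)
  then show ?thesis by (simp add: matrix_matrix_mult_def cadj_def)
qed

lemma eq_unitary_diag_iff:
  "A = U ** diag_mat d ** cadj U \<longleftrightarrow> (\<forall>i j. A $ i $ j = (\<Sum>l\<in>UNIV. U$i$l * d l * cnj (U$j$l)))"
  by (simp add: vec_eq_iff unitary_diag_component)

lemma skew_hermitian_unitary_diag:
  fixes X :: "complex^'n^'n"
  assumes skew: "cadj X = - X"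
  obtains U r where "unitary U" "X = U ** diag_mat (\<lambda>k. \<i> * complex_of_real (r k)) ** cadj U"
proof -
  define H :: "complex^'n^'n" where "H = (\<chi> i j. - \<i> * X $ i $ j)"
  have "cnj (X $ j $ i) = - X $ i $ j" for i j
    using skew by (simp add: vec_eq_iff cadj_def)
  then have "cadj H = H" by (simp add: vec_eq_iff cadj_def H_def)
  then obtain U d where U: "unitary U" and H: "H = U ** diag_mat (\<lambda>k. complex_of_real (d k)) ** cadj U"
    using hermitian_unitary_diag by blast
  have "X $ i $ j = \<i> * H $ i $ j" for i j by (simp add: H_def)
  then have "X = U ** diag_mat (\<lambda>k. \<i> * complex_of_real (d k)) ** cadj U"
    using H unfolding eq_unitary_diag_iff by (simp add: sum_distrib_left mult_ac)
  with U show ?thesis using that by blast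
qed

section \<open>Functions of unitarily diagonalised matrices\<close>

lemma mult_unitary_diag:
  assumes "unitary U"
  shows "(U ** diag_mat a ** cadj U) ** (U ** diag_mat b ** cadj U) = U ** diag_mat (\<lambda>k. a k * b k) ** cadj U"
proof -
  have "(\<Sum>k\<in>UNIV. (if i = k then a i else 0) * (if k = j then b k else 0))
      = (if i = j then a i * b i else 0)" for i j
    by (simp add: if_distrib[of "\<lambda>x. x * _"] cong: if_cong)
  then have diag: "diag_mat a ** diag_mat b = diag_mat (\<lambda>k. a k * b k)"
    by (simp add: vec_eq_iff matrix_matrix_mult_def diag_mat_def)
  have "(U ** diag_mat a ** cadj U) ** (U ** diag_mat b ** cadj U)
      = U ** diag_mat a ** (cadj U ** U) ** diag_mat b ** cadj U"
    by (simp add: matrix_mul_assoc)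
  also have "\<dots> = U ** (diag_mat a ** diag_mat b) ** cadj U"
    using assms by (simp add: unitary_def matrix_mul_assoc)
  finally show ?thesis using diag by simp
qed

lemma mpow_unitary_diag:
  assumes "unitary U"
  shows "mpow (U ** diag_mat a ** cadj U) k = U ** diag_mat (\<lambda>l. a l ^ k) ** cadj U"
proof (induction k)
  case 0
  have "diag_mat (\<lambda>l. a l ^ 0) = mat 1" by (simp add: vec_eq_iff diag_mat_def mat_def)
  then show ?case using assms by (simp add: mpow_def unitary_def)
next
  case (Suc k)
  then show ?case by (simp add: mpow_def mult_unitary_diag[OF assms])
qed

lemma mexp_unitary_diag:
  assumes U: "unitary U"
  shows "mexp (U ** diag_mat a ** cadj U) = U ** diag_mat (\<lambda>l. exp (a l)) ** cadj U"
proof -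
  have "(\<lambda>k. mpow (U ** diag_mat a ** cadj U) k $ i $ j / of_nat (fact k))
        sums (\<Sum>l\<in>UNIV. U$i$l * exp (a l) * cnj (U$j$l))" for i j
  proof -
    have "(\<lambda>k. a l ^ k / of_nat (fact k)) sums exp (a l)" for l
      using exp_converges[of "a l"] by (simp add: scaleR_conv_of_real divide_inverse mult.commute)
    then have "(\<lambda>k. \<Sum>l\<in>UNIV. U$i$l * cnj (U$j$l) * (a l ^ k / of_nat (fact k)))
        sums (\<Sum>l\<in>UNIV. U$i$l * cnj (U$j$l) * exp (a l))"
      by (intro sums_sum sums_mult)
    then show ?thesis
      by (simp add: mpow_unitary_diag[OF U] unitary_diag_component sum_divide_distrib mult_ac)
  qed
  then show ?thesis unfolding mexp_def eq_unitary_diag_iff by (simp add: sums_iff)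
qed

lemma cadj_component: "cadj A $ i $ j = cnj (A $ j $ i)"
  by (simp add: cadj_def)

lemma cadj_unitary_diag: "cadj (U ** diag_mat a ** cadj U) = U ** diag_mat (\<lambda>l. cnj (a l)) ** cadj U"
  unfolding eq_unitary_diag_iff cadj_component unitary_diag_component by (simp add: cnj_sum mult_ac)

lemma uminus_unitary_diag: "- (U ** diag_mat a ** cadj U) = U ** diag_mat (\<lambda>l. - a l) ** cadj U"
  unfolding eq_unitary_diag_iff by (simp add: unitary_diag_component sum_negf[symmetric])

lemma trace_unitary_diag:
  assumes U: "unitary U"
  shows "trace (U ** diag_mat a ** cadj U) = (\<Sum>l\<in>UNIV. a l)"
proof -
  have "trace (U ** diag_mat a ** cadj U) = (\<Sum>i\<in>UNIV. \<Sum>l\<in>UNIV. U$i$l * a l * cnj (U$i$l))"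
    by (simp add: trace_def unitary_diag_component)
  also have "\<dots> = (\<Sum>l\<in>UNIV. \<Sum>i\<in>UNIV. U$i$l * a l * cnj (U$i$l))" by (rule sum.swap)
  also have "\<dots> = (\<Sum>l\<in>UNIV. a l * (cadj U ** U) $ l $ l)"
    by (simp add: matrix_matrix_mult_def cadj_def sum_distrib_left mult_ac)
  also have "\<dots> = (\<Sum>l\<in>UNIV. a l)" using U by (simp add: unitary_def mat_def)
  finally show ?thesis .
qed

lemma frob_sq_unitary_diag:
  assumes U: "unitary U"
  shows "frob_sq (U ** diag_mat a ** cadj U) = (\<Sum>l\<in>UNIV. (cmod (a l))\<^sup>2)"
proof -
  have "frob_sq (U ** diag_mat a ** cadj U) = Re (\<Sum>l\<in>UNIV. a l * cnj (a l))"
    by (simp add: frob_sq_def cadj_unitary_diag mult_unitary_diag[OF U] trace_unitary_diag[OF U])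
  then show ?thesis by (simp only: Re_sum complex_norm_square[symmetric] Re_complex_of_real)
qed

lemma charpoly_unitary_diag:
  assumes U: "unitary U"
  shows "det (mat x - U ** diag_mat a ** cadj U) = (\<Prod>l\<in>UNIV. x - a l)"
proof -
  have "mat x = U ** diag_mat (\<lambda>l. x) ** cadj U"
  proof -
    have "(\<Sum>l\<in>UNIV. U$i$l * x * cnj (U$j$l)) = x * (U ** cadj U) $ i $ j" for i j
      by (simp add: matrix_matrix_mult_def cadj_def sum_distrib_left mult_ac)
    then show ?thesis using U unfolding eq_unitary_diag_iff by (simp add: unitary_def mat_def)
  qed
  then have "mat x - U ** diag_mat a ** cadj U = U ** diag_mat (\<lambda>l. x - a l) ** cadj U"
    by (simp add: eq_unitary_diag_iff unitary_diag_component sum_subtractf algebra_simps)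
  then have "det (mat x - U ** diag_mat a ** cadj U) = det (diag_mat (\<lambda>l. x - a l)) * det (U ** cadj U)"
    by (simp add: det_mul)
  also have "\<dots> = (\<Prod>l\<in>UNIV. x - a l)"
    using U by (simp add: unitary_def det_diagonal diag_mat_def)
  finally show ?thesis .
qed

section \<open>Logarithms of Q in su(n)\<close>

lemma prod_linear_factors_cancel:
  fixes a :: "'k \<Rightarrow> complex" and b :: "'j \<Rightarrow> complex"
  assumes "\<forall>x. (x - c) * (\<Prod>k\<in>A. x - a k) = (x - c) * (\<Prod>j\<in>B. x - b j)"
  shows "\<forall>x. (\<Prod>k\<in>A. x - a k) = (\<Prod>j\<in>B. x - b j)"
proof -
  let ?f = "\<lambda>x. \<Prod>k\<in>A. x - a k" and ?g = "\<lambda>x. \<Prod>j\<in>B. x - b j"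
  have off: "?g x = ?f x" if "x \<noteq> c" for x
    using assms that by (metis mult_left_cancel right_minus_eq)
  \<comment> \<open>both products are continuous, so the identity extends to the cancelled root \<open>c\<close>\<close>
  have "\<forall>\<^sub>F x in at c. ?g x = ?f x"
    unfolding eventually_at_filter by (intro always_eventually) (auto intro: off)
  moreover have "(?g \<longlongrightarrow> ?g c) (at c)" by (intro tendsto_intros)
  ultimately have "(?f \<longlongrightarrow> ?g c) (at c)" by (rule tendsto_cong[THEN iffD1])
  moreover have "(?f \<longlongrightarrow> ?f c) (at c)" by (intro tendsto_intros)
  ultimately have "?f c = ?g c" by (intro tendsto_unique[OF at_neq_bot])
  then show ?thesis using off by (metis (no_types))
qed

lemma prod_linear_factors_eq_imp_bij:
  fixes a :: "'k \<Rightarrow> complex" and b :: "'j \<Rightarrow> complex"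
  assumes "finite B" "finite A" "\<forall>x. (\<Prod>k\<in>A. x - a k) = (\<Prod>j\<in>B. x - b j)"
  shows "\<exists>p. bij_betw p B A \<and> (\<forall>j\<in>B. a (p j) = b j)"
  using assms
proof (induction B arbitrary: A rule: finite_induct)
  case empty
  have "A = {}"
  proof (rule ccontr)
    assume "A \<noteq> {}"
    then obtain k where "k \<in> A" by auto
    then have "(\<Prod>k'\<in>A. a k - a k') = 0" using empty.prems(1) by (auto intro: prod_zero)
    then show False using empty.prems(2) by simp
  qed
  then show ?case by (auto simp: bij_betw_def)
next
  case (insert j B)
  have "(\<Prod>k\<in>A. b j - a k) = (\<Prod>j'\<in>insert j B. b j - b j')" using insert.prems by blast
  also have "\<dots> = 0" using insert.hyps by (auto intro: prod_zero)
  finally obtain k where k: "k \<in> A" "a k = b j" using insert.prems(1) by auto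
  let ?f = "\<lambda>x. \<Prod>k\<in>A - {k}. x - a k" and ?g = "\<lambda>x. \<Prod>j'\<in>B. x - b j'"
  have "\<forall>x. (x - b j) * ?f x = (x - b j) * ?g x"
  proof
    fix x
    have "(x - b j) * ?f x = (\<Prod>k\<in>A. x - a k)"
      using prod.remove[OF insert.prems(1) k(1), of "\<lambda>k. x - a k"] k(2) by simp
    also have "\<dots> = (x - b j) * ?g x" using insert.prems(2) insert.hyps by simp
    finally show "(x - b j) * ?f x = (x - b j) * ?g x" .
  qed
  then have "\<forall>x. ?f x = ?g x" by (rule prod_linear_factors_cancel)
  then obtain p where p: "bij_betw p B (A - {k})" "\<forall>j'\<in>B. a (p j') = b j'"
    using insert.IH[of "A - {k}"] insert.prems(1) by auto
  have "bij_betw (p(j := k)) (insert j B) A"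
  proof -
    have "p ` B = A - {k}" "inj_on p B" using p(1) by (auto simp: bij_betw_def)
    moreover have "(p(j := k)) ` B = p ` B" "inj_on (p(j := k)) B"
      using insert.hyps \<open>inj_on p B\<close> by (auto simp: inj_on_def)
    ultimately show ?thesis using k(1) insert.hyps by (auto simp: bij_betw_def)
  qed
  moreover have "\<forall>j'\<in>insert j B. a ((p(j := k)) j') = b j'" using p(2) k(2) insert.hyps by auto
  ultimately show ?case by blast
qed

lemma eigvals_unitary_diag:
  fixes U :: "complex^'n^'n"
  assumes "unitary U" "eigvals_mult (U ** diag_mat d ** cadj U) ev"
  obtains p where "bij_betw p {1..CARD('n)} UNIV" "\<forall>j\<in>{1..CARD('n)}. d (p j) = ev j"
  using prod_linear_factors_eq_imp_bij[of "{1..CARD('n)}" UNIV d ev] assms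
  by (auto simp: eigvals_mult_def charpoly_unitary_diag)

lemma sum_reindex_bij:
  assumes "bij_betw p {1..CARD('n)} (UNIV :: 'n set)"
  shows "(\<Sum>l\<in>UNIV. f l) = (\<Sum>j=1..CARD('n). f (p j))"
  using sum.reindex_bij_betw[OF assms, of f] by simp

lemma su_frob_sq_trace_eigvals:
  fixes X :: "complex^'n^'n"
  assumes "X \<in> su" "eigvals_mult X ev"
  shows "frob_sq X = (\<Sum>j=1..CARD('n). (cmod (ev j))\<^sup>2)" and "(\<Sum>j=1..CARD('n). ev j) = 0"
proof -
  obtain U r where U: "unitary U" and X: "X = U ** diag_mat (\<lambda>l. \<i> * complex_of_real (r l)) ** cadj U"
    using skew_hermitian_unitary_diag assms(1) by (auto simp: su_def)
  have "eigvals_mult (U ** diag_mat (\<lambda>l. \<i> * complex_of_real (r l)) ** cadj U) ev"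
    using assms(2) X by simp
  then obtain p where p: "bij_betw p {1..CARD('n)} UNIV"
    and ev: "\<forall>j\<in>{1..CARD('n)}. \<i> * complex_of_real (r (p j)) = ev j"
    using eigvals_unitary_diag[OF U] by blast
  have "frob_sq X = (\<Sum>j=1..CARD('n). (cmod (\<i> * complex_of_real (r (p j))))\<^sup>2)"
    using frob_sq_unitary_diag[OF U] X sum_reindex_bij[OF p, of "\<lambda>l. (cmod (\<i> * complex_of_real (r l)))\<^sup>2"]
    by simp
  then show "frob_sq X = (\<Sum>j=1..CARD('n). (cmod (ev j))\<^sup>2)" using ev by simp
  have "trace X = (\<Sum>j=1..CARD('n). \<i> * complex_of_real (r (p j)))"
    using trace_unitary_diag[OF U] X sum_reindex_bij[OF p, of "\<lambda>l. \<i> * complex_of_real (r l)"]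
    by simp
  also have "\<dots> = (\<Sum>j=1..CARD('n). ev j)"
    using ev by (intro sum.cong) auto
  finally show "(\<Sum>j=1..CARD('n). ev j) = 0" using assms(1) by (simp add: su_def)
qed

lemma eigvals_exp_su:
  fixes X :: "complex^'n^'n"
  assumes "X \<in> su" "eigvals_mult (mexp X) mu"
  obtains U r p where "unitary U" "X = U ** diag_mat (\<lambda>l. \<i> * complex_of_real (r l)) ** cadj U"
    "bij_betw p {1..CARD('n)} UNIV" "\<forall>j\<in>{1..CARD('n)}. exp (\<i> * complex_of_real (r (p j))) = mu j"
proof -
  obtain U r where U: "unitary U" and X: "X = U ** diag_mat (\<lambda>l. \<i> * complex_of_real (r l)) ** cadj U"
    using skew_hermitian_unitary_diag assms(1) by (auto simp: su_def)
  then have "mexp X = U ** diag_mat (\<lambda>l. exp (\<i> * complex_of_real (r l))) ** cadj U"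
    by (simp add: mexp_unitary_diag)
  then have "eigvals_mult (U ** diag_mat (\<lambda>l. exp (\<i> * complex_of_real (r l))) ** cadj U) mu"
    using assms(2) by simp
  then obtain p where "bij_betw p {1..CARD('n)} UNIV"
    "\<forall>j\<in>{1..CARD('n)}. exp (\<i> * complex_of_real (r (p j))) = mu j"
    using eigvals_unitary_diag[OF U] by blast
  with U X show ?thesis using that by blast
qed

lemma eigvals_exp_su_unimodular:
  fixes X :: "complex^'n^'n"
  assumes "X \<in> su" "eigvals_mult (mexp X) mu" "j \<in> {1..CARD('n)}"
  shows "cmod (mu j) = 1"
proof -
  obtain U r p where "unitary U" "X = U ** diag_mat (\<lambda>l. \<i> * complex_of_real (r l)) ** cadj U"
    "bij_betw p {1..CARD('n)} UNIV" "\<forall>j\<in>{1..CARD('n)}. exp (\<i> * complex_of_real (r (p j))) = mu j"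
    by (rule eigvals_exp_su[OF assms(1,2)])
  then have "mu j = exp (\<i> * complex_of_real (r (p j)))" using assms(3) by simp
  then show ?thesis by simp
qed

lemma exp_i_Arg_unimodular:
  assumes "cmod z = 1"
  shows "exp (\<i> * complex_of_real (Arg z)) = z"
proof -
  have "cis (Arg z) = sgn z" using assms by (intro cis_Arg) auto
  then show ?thesis using assms by (simp add: cis_conv_exp sgn_div_norm)
qed

lemma exp_i_eq_imp_shift:
  assumes "exp (\<i> * complex_of_real r) = exp (\<i> * complex_of_real s)"
  shows "\<exists>m::int. r = s + 2*pi*m"
proof -
  obtain m :: int where "\<i> * complex_of_real r = \<i> * complex_of_real s + of_int (2 * m) * pi * \<i>"
    using assms unfolding exp_eq by blast
  then have "r = s + 2*pi*m" by (simp add: complex_eq_iff)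
  then show ?thesis ..
qed

lemma su_log_frob_sq_shifted_Arg:
  fixes X Q :: "complex^'n^'n" and mu :: "nat \<Rightarrow> complex"
  assumes X: "X \<in> su" "mexp X = Q" and eig: "eigvals_mult Q mu"
  obtains k :: "nat \<Rightarrow> int" where "frob_sq X = (\<Sum>j=1..CARD('n). (Arg (mu j) + 2*pi*k j)\<^sup>2)"
    "(\<Sum>j=1..CARD('n). Arg (mu j) + 2*pi*k j) = 0"
proof -
  let ?N = "{1..CARD('n)}"
  have eig_exp: "eigvals_mult (mexp X) mu" using X(2) eig by simp
  then obtain U r p where U: "unitary U" and Xr: "X = U ** diag_mat (\<lambda>l. \<i> * complex_of_real (r l)) ** cadj U"
    and p: "bij_betw p ?N UNIV" and exp_r: "\<forall>j\<in>?N. exp (\<i> * complex_of_real (r (p j))) = mu j"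
    by (rule eigvals_exp_su[OF X(1)])
  have "\<forall>j\<in>?N. \<exists>m::int. r (p j) = Arg (mu j) + 2*pi*m"
  proof
    fix j assume j: "j \<in> ?N"
    have "exp (\<i> * complex_of_real (Arg (mu j))) = mu j"
      using eigvals_exp_su_unimodular[OF X(1) eig_exp j] by (rule exp_i_Arg_unimodular)
    then show "\<exists>m::int. r (p j) = Arg (mu j) + 2*pi*m"
      using exp_r j by (intro exp_i_eq_imp_shift) simp
  qed
  from bchoice[OF this] obtain k :: "nat \<Rightarrow> int"
    where k: "\<forall>j\<in>?N. r (p j) = Arg (mu j) + 2*pi*k j" ..
  have "frob_sq X = (\<Sum>j\<in>?N. (r (p j))\<^sup>2)"
    using Xr frob_sq_unitary_diag[OF U] sum_reindex_bij[OF p, of "\<lambda>l. (r l)\<^sup>2"]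
    by (simp add: norm_mult)
  also have "\<dots> = (\<Sum>j\<in>?N. (Arg (mu j) + 2*pi*k j)\<^sup>2)"
    using k by (intro sum.cong) auto
  finally have "frob_sq X = (\<Sum>j\<in>?N. (Arg (mu j) + 2*pi*k j)\<^sup>2)" .
  moreover have "(\<Sum>j\<in>?N. Arg (mu j) + 2*pi*k j) = 0"
  proof -
    have "(\<Sum>l\<in>UNIV. complex_of_real (r l)) = 0"
      using X(1) Xr trace_unitary_diag[OF U] by (simp add: su_def sum_distrib_left[symmetric])
    then have "(\<Sum>l\<in>UNIV. r l) = 0" by (metis of_real_sum of_real_eq_0_iff)
    then have "(\<Sum>j\<in>?N. r (p j)) = 0" using sum_reindex_bij[OF p, of r] by simp
    then show ?thesis using k by (metis (no_types, lifting) sum.cong)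
  qed
  ultimately show ?thesis by (rule that)
qed

lemma su_log_of_shifted_Arg:
  fixes X0 Q :: "complex^'n^'n" and mu :: "nat \<Rightarrow> complex" and k :: "nat \<Rightarrow> int"
  assumes X0: "X0 \<in> su" "mexp X0 = Q" and eig: "eigvals_mult Q mu"
    and k: "(\<Sum>j=1..CARD('n). Arg (mu j) + 2*pi*k j) = 0"
  obtains X where "X \<in> su" "mexp X = Q" "frob_sq X = (\<Sum>j=1..CARD('n). (Arg (mu j) + 2*pi*k j)\<^sup>2)"
proof -
  let ?N = "{1..CARD('n)}"
  have eig_exp: "eigvals_mult (mexp X0) mu" using X0(2) eig by simp
  have exp_Arg: "exp (\<i> * complex_of_real (Arg (mu j))) = mu j" if "j \<in> ?N" for j
    using eigvals_exp_su_unimodular[OF X0(1) eig_exp that] by (rule exp_i_Arg_unimodular)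
  obtain U r p where U: "unitary U" and X0r: "X0 = U ** diag_mat (\<lambda>l. \<i> * complex_of_real (r l)) ** cadj U"
    and p: "bij_betw p ?N UNIV" and exp_r: "\<forall>j\<in>?N. exp (\<i> * complex_of_real (r (p j))) = mu j"
    by (rule eigvals_exp_su[OF X0(1) eig_exp])
  define q where "q = inv_into ?N p"
  have q: "q l \<in> ?N" "p (q l) = l" for l
    using bij_betw_apply[OF bij_betw_inv_into[OF p]] bij_betw_inv_into_right[OF p] by (auto simp: q_def)
  have qp: "q (p j) = j" if "j \<in> ?N" for j
    using bij_betw_inv_into_left[OF p that] by (simp add: q_def)
  define d where "d l = \<i> * complex_of_real (Arg (mu (q l)) + 2*pi*k (q l))" for l
  define X where "X = U ** diag_mat d ** cadj U"
  have "exp (d l) = exp (\<i> * complex_of_real (r l))" for l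
  proof -
    have "exp (d l) = exp (\<i> * complex_of_real (Arg (mu (q l))))"
      unfolding d_def exp_eq by (intro exI[of _ "k (q l)"]) (simp add: algebra_simps)
    also have "\<dots> = mu (q l)" using exp_Arg q(1) by simp
    also have "\<dots> = exp (\<i> * complex_of_real (r l))" using exp_r q by metis
    finally show ?thesis .
  qed
  then have "mexp X = Q" using X0 by (simp add: X_def X0r mexp_unitary_diag[OF U])
  have "cadj X = - X"
    by (simp add: X_def cadj_unitary_diag uminus_unitary_diag d_def)
  have d_p: "d (p j) = \<i> * complex_of_real (Arg (mu j) + 2*pi*k j)" if "j \<in> ?N" for j
    using qp[OF that] by (simp add: d_def)
  have "trace X = (\<Sum>j\<in>?N. d (p j))"
    using trace_unitary_diag[OF U] sum_reindex_bij[OF p, of d] by (simp add: X_def)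
  also have "\<dots> = \<i> * complex_of_real (\<Sum>j\<in>?N. Arg (mu j) + 2*pi*k j)"
    using d_p by (simp add: sum_distrib_left)
  finally have "trace X = 0" by (simp only: k of_real_0 mult_zero_right)
  have "frob_sq X = (\<Sum>j\<in>?N. (cmod (d (p j)))\<^sup>2)"
    using frob_sq_unitary_diag[OF U] sum_reindex_bij[OF p, of "\<lambda>l. (cmod (d l))\<^sup>2"]
    by (simp add: X_def)
  also have "\<dots> = (\<Sum>j\<in>?N. (Arg (mu j) + 2*pi*k j)\<^sup>2)"
  proof -
    have "(cmod (\<i> * complex_of_real x))\<^sup>2 = x\<^sup>2" for x by (simp add: norm_mult)
    then show ?thesis by (intro sum.cong refl) (simp only: d_p)
  qed
  finally show ?thesis
    using \<open>mexp X = Q\<close> \<open>cadj X = - X\<close> \<open>trace X = 0\<close> by (intro that) (auto simp: su_def)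
qed

lemma frob_sq_su_logs:
  fixes X0 Q :: "complex^'n^'n" and mu :: "nat \<Rightarrow> complex"
  assumes X0: "X0 \<in> su" "mexp X0 = Q" and eig: "eigvals_mult Q mu"
  shows "{frob_sq X | X. X \<in> su \<and> mexp X = Q} =
    {\<Sum>j=1..CARD('n). (Arg (mu j) + 2*pi*k j)\<^sup>2 | k :: nat \<Rightarrow> int.
       (\<Sum>j=1..CARD('n). Arg (mu j) + 2*pi*k j) = 0}"
proof (intro subset_antisym subsetI)
  fix s assume "s \<in> {frob_sq X | X. X \<in> su \<and> mexp X = Q}"
  then obtain X where X: "X \<in> su" "mexp X = Q" "s = frob_sq X" by auto
  obtain k :: "nat \<Rightarrow> int" where "frob_sq X = (\<Sum>j=1..CARD('n). (Arg (mu j) + 2*pi*k j)\<^sup>2)"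
    "(\<Sum>j=1..CARD('n). Arg (mu j) + 2*pi*k j) = 0"
    by (rule su_log_frob_sq_shifted_Arg[OF X(1,2) eig])
  then show "s \<in> {\<Sum>j=1..CARD('n). (Arg (mu j) + 2*pi*k j)\<^sup>2 | k :: nat \<Rightarrow> int.
       (\<Sum>j=1..CARD('n). Arg (mu j) + 2*pi*k j) = 0}"
    using X(3) by auto
next
  fix s assume "s \<in> {\<Sum>j=1..CARD('n). (Arg (mu j) + 2*pi*k j)\<^sup>2 | k :: nat \<Rightarrow> int.
       (\<Sum>j=1..CARD('n). Arg (mu j) + 2*pi*k j) = 0}"
  then obtain k :: "nat \<Rightarrow> int" where s: "s = (\<Sum>j=1..CARD('n). (Arg (mu j) + 2*pi*k j)\<^sup>2)"
    and k: "(\<Sum>j=1..CARD('n). Arg (mu j) + 2*pi*k j) = 0" by auto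
  obtain X where "X \<in> su" "mexp X = Q" "frob_sq X = (\<Sum>j=1..CARD('n). (Arg (mu j) + 2*pi*k j)\<^sup>2)"
    by (rule su_log_of_shifted_Arg[OF X0 eig k])
  then show "s \<in> {frob_sq X | X. X \<in> su \<and> mexp X = Q}" using s by (intro CollectI exI[of _ X]) simp
qed

lemma frob_sq_trace_shifted_Arg_eigvals:
  fixes X0 :: "complex^'n^'n" and mu :: "nat \<Rightarrow> complex" and h :: "nat \<Rightarrow> int"
  assumes "X0 \<in> su"
    and "eigvals_mult X0 (\<lambda>j. \<i> * complex_of_real (Arg (mu j) + 2 * of_int (h j) * pi))"
  shows "frob_sq X0 = (\<Sum>j=1..CARD('n). (Arg (mu j) + 2*pi*h j)\<^sup>2)"
    and "(\<Sum>j=1..CARD('n). Arg (mu j) + 2*pi*h j) = 0"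
proof -
  note ev = su_frob_sq_trace_eigvals[OF assms]
  have "(cmod (\<i> * complex_of_real x))\<^sup>2 = x\<^sup>2" for x by (simp add: norm_mult)
  then have "frob_sq X0 = (\<Sum>j=1..CARD('n). (Arg (mu j) + 2 * of_int (h j) * pi)\<^sup>2)"
    using ev(1) by (simp only:)
  then show "frob_sq X0 = (\<Sum>j=1..CARD('n). (Arg (mu j) + 2*pi*h j)\<^sup>2)"
    by (simp add: mult_ac)
  have "\<i> * complex_of_real (\<Sum>j=1..CARD('n). Arg (mu j) + 2 * of_int (h j) * pi) = 0"
    using ev(2) by (simp only: of_real_sum sum_distrib_left)
  then have "(\<Sum>j=1..CARD('n). Arg (mu j) + 2 * of_int (h j) * pi) = 0"
    by (simp only: mult_eq_0_iff of_real_eq_0_iff complex_i_not_zero simp_thms)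
  then show "(\<Sum>j=1..CARD('n). Arg (mu j) + 2*pi*h j) = 0" by (simp add: mult_ac)
qed

section \<open>The minimal norm m(Q)\<close>

lemma m_Q_Theta_threshold:
  fixes Q X0 :: "complex^'n^'n" and mu :: "nat \<Rightarrow> complex" and h :: "nat \<Rightarrow> int"
  assumes X0: "X0 \<in> su" "mexp X0 = Q" and eig: "eigvals_mult Q mu"
    and eigX0: "eigvals_mult X0 (\<lambda>j. \<i> * complex_of_real (Arg (mu j) + 2 * of_int (h j) * pi))"
    and L: "L \<le> CARD('n)" and \<theta>: "-pi < \<theta>" "\<theta> \<le> pi"
    and below: "\<forall>j\<in>{1..L}. Arg (mu j) \<le> \<theta>" and above: "\<forall>j\<in>{L+1..CARD('n)}. \<theta> \<le> Arg (mu j)"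
    and hsum: "(\<Sum>j=1..CARD('n). h j) = - int (CARD('n) - L)"
  shows "m_Q Q = (\<Sum>j=1..L. (Arg (mu j))\<^sup>2) + (\<Sum>j=L+1..CARD('n). (2*pi - Arg (mu j))\<^sup>2)"
    and "X0 \<in> Theta Q \<longleftrightarrow>
      (\<forall>j\<in>{1..CARD('n)}. (h j = 0 \<and> Arg (mu j) \<le> \<theta>) \<or> (h j = -1 \<and> \<theta> \<le> Arg (mu j)))"
proof -
  let ?N = "{1..CARD('n)}"
  let ?bound = "(\<Sum>j=1..L. (Arg (mu j))\<^sup>2) + (\<Sum>j=L+1..CARD('n). (2*pi - Arg (mu j))\<^sup>2)"
  have t: "\<forall>j\<in>?N. -pi < Arg (mu j) \<and> Arg (mu j) \<le> pi" by (simp add: mpi_less_Arg Arg_le_pi)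
  note bound = sum_shifted_sq_lower_bound[OF L t \<theta> below above]
  note X0_shifts = frob_sq_trace_shifted_Arg_eigvals[OF X0(1) eigX0]
  have sum_eq_h: "(\<Sum>j\<in>?N. k j) = - int (CARD('n) - L)"
    if "(\<Sum>j\<in>?N. Arg (mu j) + 2*pi*k j) = 0" for k :: "nat \<Rightarrow> int"
  proof -
    have "2 * pi * of_int (\<Sum>j\<in>?N. k j) = 2 * pi * of_int (\<Sum>j\<in>?N. h j)"
      using that X0_shifts(2) unfolding sum_int_shifts by linarith
    then have "(\<Sum>j\<in>?N. k j) = (\<Sum>j\<in>?N. h j)" by (simp only: mult_cancel_left of_int_eq_iff) simp
    then show ?thesis using hsum by simp
  qed
  define k0 :: "nat \<Rightarrow> int" where "k0 j = (if j \<le> L then 0 else -1)" for j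
  note k0_sum = sum_shifted_sq_lower_bound_attained(1)[OF L k0_def t \<theta> below above]
    and k0_opt = sum_shifted_sq_lower_bound_attained(2)[OF L k0_def t \<theta> below above]
  have "(\<Sum>j\<in>?N. Arg (mu j) + 2*pi*k0 j) = (\<Sum>j\<in>?N. Arg (mu j) + 2*pi*h j)"
    unfolding sum_int_shifts k0_sum hsum ..
  then have "(\<Sum>j\<in>?N. Arg (mu j) + 2*pi*k0 j) = 0" using X0_shifts(2) by simp
  then have "?bound \<in> {frob_sq X | X. X \<in> su \<and> mexp X = Q}"
    unfolding frob_sq_su_logs[OF X0 eig] mem_Collect_eq using k0_opt by (intro exI[of _ k0]) simp
  moreover have "?bound \<le> s" if s: "s \<in> {frob_sq X | X. X \<in> su \<and> mexp X = Q}" for s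
  proof -
    obtain k :: "nat \<Rightarrow> int" where "s = (\<Sum>j\<in>?N. (Arg (mu j) + 2*pi*k j)\<^sup>2)"
      and "(\<Sum>j\<in>?N. Arg (mu j) + 2*pi*k j) = 0"
      using s unfolding frob_sq_su_logs[OF X0 eig] by auto
    then show ?thesis using bound(1)[OF sum_eq_h] by simp
  qed
  ultimately show m_Q: "m_Q Q = ?bound" unfolding m_Q_def by (rule cInf_eq_minimum)
  have "X0 \<in> Theta Q \<longleftrightarrow> (\<Sum>j\<in>?N. (Arg (mu j) + 2*pi*h j)\<^sup>2) = ?bound"
    using X0 X0_shifts(1) m_Q by (simp add: Theta_def)
  then show "X0 \<in> Theta Q \<longleftrightarrow>
      (\<forall>j\<in>?N. (h j = 0 \<and> Arg (mu j) \<le> \<theta>) \<or> (h j = -1 \<and> \<theta> \<le> Arg (mu j)))"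
    using bound(2)[OF hsum] by simp
qed

lemma m_Q_Theta_zeta_zero:
  fixes Q X0 :: "complex^'n^'n" and mu :: "nat \<Rightarrow> complex" and h :: "nat \<Rightarrow> int"
  assumes X0: "X0 \<in> su" "mexp X0 = Q" and eig: "eigvals_mult Q mu"
    and eigX0: "eigvals_mult X0 (\<lambda>j. \<i> * complex_of_real (Arg (mu j) + 2 * of_int (h j) * pi))"
    and hsum: "(\<Sum>j=1..CARD('n). h j) = 0"
  shows "m_Q Q = (\<Sum>j=1..CARD('n). (Arg (mu j))\<^sup>2) \<and> (X0 \<in> Theta Q \<longleftrightarrow> (\<forall>j\<in>{1..CARD('n)}. h j = 0))"
proof -
  let ?N = "{1..CARD('n)}"
  have "-pi < pi" "\<forall>j\<in>?N. Arg (mu j) \<le> pi" "\<forall>j\<in>{CARD('n)+1..CARD('n)}. pi \<le> Arg (mu j)"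
    "(\<Sum>j\<in>?N. h j) = - int (CARD('n) - CARD('n))"
    using hsum by (auto simp: Arg_le_pi)
  note threshold = m_Q_Theta_threshold[OF X0 eig eigX0 order_refl this(1) order_refl this(2-4)]
  have "X0 \<in> Theta Q \<longleftrightarrow> (\<forall>j\<in>?N. h j = 0 \<or> (h j = -1 \<and> Arg (mu j) = pi))"
    using threshold(2) hsum by (auto simp: Arg_le_pi antisym)
  also have "\<dots> \<longleftrightarrow> (\<forall>j\<in>?N. h j = 0)"
  proof
    assume "\<forall>j\<in>?N. h j = 0 \<or> (h j = -1 \<and> Arg (mu j) = pi)"
    then have "\<And>j. j \<in> ?N \<Longrightarrow> h j \<le> 0" by fastforce
    then show "\<forall>j\<in>?N. h j = 0" using sum_nonpos_eq_0_iff[of ?N h] hsum by simp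
  qed simp
  finally show ?thesis using threshold(1) hsum by simp
qed

lemma m_Q_Theta_zeta_pos:
  fixes Q X0 :: "complex^'n^'n" and mu :: "nat \<Rightarrow> complex" and h :: "nat \<Rightarrow> int"
  assumes X0: "X0 \<in> su" "mexp X0 = Q" and eig: "eigvals_mult Q mu"
    and eigX0: "eigvals_mult X0 (\<lambda>j. \<i> * complex_of_real (Arg (mu j) + 2 * of_int (h j) * pi))"
    and sorted: "\<forall>i j. 1 \<le> i \<and> i \<le> j \<and> j \<le> CARD('n) \<longrightarrow> Arg (mu i) \<le> Arg (mu j)"
    and L: "1 \<le> L" "L < CARD('n)"
    and hsum: "(\<Sum>j=1..CARD('n). h j) = - int (CARD('n) - L)"
  shows "m_Q Q = (\<Sum>j=1..L. (Arg (mu j))\<^sup>2) + (\<Sum>j=L+1..CARD('n). (2 * pi - Arg (mu j))\<^sup>2) \<and>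
    (mu L \<noteq> mu (L+1) \<longrightarrow>
       (X0 \<in> Theta Q \<longleftrightarrow> (\<forall>j\<in>{1..L}. h j = 0) \<and> (\<forall>l\<in>{L+1..CARD('n)}. h l = -1))) \<and>
    (mu L = mu (L+1) \<longrightarrow>
       (X0 \<in> Theta Q \<longleftrightarrow>
          (\<forall>r\<in>{1..L-1}. mu r \<noteq> mu L \<longrightarrow> h r = 0) \<and>
          (\<forall>t\<in>{L+2..CARD('n)}. mu t \<noteq> mu L \<longrightarrow> h t = -1) \<and>
          (\<forall>m\<in>{1..CARD('n)}. mu m = mu L \<longrightarrow> h m \<in> {0, -1})))"
proof -
  let ?N = "{1..CARD('n)}" and ?t = "\<lambda>j. Arg (mu j)"
  have \<theta>: "-pi < ?t L" "?t L \<le> pi" by (simp_all add: mpi_less_Arg Arg_le_pi)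
  have below: "\<forall>j\<in>{1..L}. ?t j \<le> ?t L" and above: "\<forall>j\<in>{L+1..CARD('n)}. ?t L \<le> ?t j"
    using sorted L by auto
  note threshold = m_Q_Theta_threshold[OF X0 eig eigX0 less_imp_le[OF L(2)] \<theta> below above hsum]
  have "eigvals_mult (mexp X0) mu" using X0(2) eig by simp
  then have exp_Arg: "exp (\<i> * complex_of_real (?t j)) = mu j" if "j \<in> ?N" for j
    using eigvals_exp_su_unimodular[OF X0(1) _ that] by (intro exp_i_Arg_unimodular)
  have "L \<in> ?N" using L by simp
  then have mu_eq_iff: "\<forall>j\<in>?N. mu j = mu L \<longleftrightarrow> ?t j = ?t L"
    using exp_Arg by metis
  have "?t L < ?t (L+1)" if "mu L \<noteq> mu (L+1)"
  proof -
    have "L + 1 \<in> ?N" using L by simp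
    then have "?t L \<noteq> ?t (L+1)" using that mu_eq_iff by (metis (no_types))
    moreover have "?t L \<le> ?t (L+1)" using sorted L by auto
    ultimately show ?thesis by simp
  qed
  then show ?thesis
    using threshold optimal_shifts_at_strict_gap[OF L sorted _ hsum]
      optimal_shifts_at_tie[OF L sorted mu_eq_iff, of h] by auto
qed

theorem proposition2p8:
  fixes Q X0 :: "complex^'n^'n" and mu :: "nat \<Rightarrow> complex" and h :: "nat \<Rightarrow> int"
  assumes n2: "CARD('n) \<ge> 2"
    and Q: "Q \<in> SU"
    and eig: "eigvals_mult Q mu"
    and sorted: "\<forall>i j. 1 \<le> i \<and> i \<le> j \<and> j \<le> CARD('n) \<longrightarrow> Arg (mu i) \<le> Arg (mu j)"
    and zeta_nonneg: "zeta CARD('n) mu \<ge> 0"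
    and X0: "X0 \<in> su" "mexp X0 = Q"
    and eigX0: "eigvals_mult X0 (\<lambda>j. \<i> * complex_of_real (Arg (mu j) + 2 * of_int (h j) * pi))"
    and hsum: "(\<Sum>j=1..CARD('n). real_of_int (h j)) = - zeta CARD('n) mu"
  shows
    "(zeta CARD('n) mu = 0 \<longrightarrow>
        m_Q Q = (\<Sum>j=1..CARD('n). (Arg (mu j))\<^sup>2) \<and>
        (X0 \<in> Theta Q \<longleftrightarrow> (\<forall>j\<in>{1..CARD('n)}. h j = 0)))
   \<and>
    (zeta CARD('n) mu \<ge> 1 \<longrightarrow>
      (let n = CARD('n); z = nat \<lfloor>zeta CARD('n) mu\<rfloor> in
        m_Q Q = (\<Sum>j=1..n-z. (Arg (mu j))\<^sup>2) + (\<Sum>j=n-z+1..n. (2 * pi - Arg (mu j))\<^sup>2) \<and>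
        (mu (n-z) \<noteq> mu (n-z+1) \<longrightarrow>
           (X0 \<in> Theta Q \<longleftrightarrow>
              (\<forall>j\<in>{1..n-z}. h j = 0) \<and> (\<forall>l\<in>{n-z+1..n}. h l = -1))) \<and>
        (mu (n-z) = mu (n-z+1) \<longrightarrow>
           (X0 \<in> Theta Q \<longleftrightarrow>
              (\<forall>r\<in>{1..n-z-1}. mu r \<noteq> mu (n-z) \<longrightarrow> h r = 0) \<and>
              (\<forall>t\<in>{n-z+2..n}. mu t \<noteq> mu (n-z) \<longrightarrow> h t = -1) \<and>
              (\<forall>m\<in>{1..n}. mu m = mu (n-z) \<longrightarrow> h m \<in> {0, -1})))))"
proof -
  let ?n = "CARD('n)"
  define S where "S = (\<Sum>j=1..?n. h j)"
  define z where "z = nat (- S)"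
  have zeta: "zeta ?n mu = - real_of_int S"
    unfolding S_def of_int_sum using hsum by linarith
  then have z: "int z = - S" "zeta ?n mu = real z"
    using zeta_nonneg by (simp_all add: z_def)
  have "(\<Sum>j=1..?n. Arg (mu j)) + 2 * pi * real_of_int S = 0"
    using frob_sq_trace_shifted_Arg_eigvals(2)[OF X0(1) eigX0] unfolding sum_int_shifts S_def .
  then have "(\<Sum>j=1..?n. Arg (mu j)) = 2 * pi * z" using zeta z(2) by simp
  moreover have "(\<Sum>j=1..?n. Arg (mu j)) \<le> ?n * pi"
    using sum_bounded_above[of "{1..?n}" "\<lambda>j. Arg (mu j)" pi] by (simp add: Arg_le_pi)
  ultimately have "2 * z \<le> ?n" by simp
  show ?thesis
  proof (cases "z = 0")
    case True
    then show ?thesis using m_Q_Theta_zeta_zero[OF X0 eig eigX0] z by (simp add: S_def)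
  next
    case False
    then have "1 \<le> ?n - z" "?n - z < ?n" "(\<Sum>j=1..?n. h j) = - int (?n - (?n - z))"
      using \<open>2 * z \<le> ?n\<close> z by (auto simp: S_def)
    then show ?thesis using m_Q_Theta_zeta_pos[OF X0 eig eigX0 sorted] False z(2) by (simp add: Let_def)
  qed
qed

end
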